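(* Let $\Omega$ be a commutative adic $\mathbb{Z}_\ell$-algebra, $\mathbb{F}$ a finite field, $k$ an integer prime to $\ell$, and $\gamma$ the image of the geometric Frobenius $\mathrm{Frob}_{\mathbb{F}}$ in $\Gamma_{k\ell^\infty}$. Let $P=\{f(T)\in\Omega[T]:f(0)\in\Omega^\times\}$ and $S=\{f\in\Omega[[\Gamma_{k\ell^\infty}]]:$ the image of $f$ in $\Omega/\mathrm{Jac}(\Omega)[[\Gamma_{k\ell^\infty}]]$ is a nonzerodivisor$\}$. Then the ring homomorphism $\Omega[T]\to\Omega[[\Gamma_{k\ell^\infty}]]$, $T\mapsto\gamma^{-1}$, maps $P$ into $S$.
   Context: Adic ring $\Omega$: $\mathrm{Jac}(\Omega)^n$ has finite index for all $n\ge1$ and $\Omega=\varprojlim\Omega/\mathrm{Jac}(\Omega)^n$. With $q=|\mathbb{F}|$, $\Gamma_{k\ell^\infty}=\mathrm{Gal}(\bigcup_n\mathbb{F}_{q^{k\ell^n}}/\mathbb{F})\cong\mathbb{Z}/k\times\mathbb{Z}_\ell$; $\mathrm{Frob}_{\mathbb{F}}$ is the automorphism $x\mapsto x^{1/q}$. $\Omega[[\Gamma]]=\varprojlim_{J,U}\Omega/J[\Gamma/U]$. *)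

theory Defs
  imports "HOL-Computational_Algebra.Polynomial" "HOL-Computational_Algebra.Primes"
begin

definition is_ideal :: "'a::comm_ring_1 set \<Rightarrow> bool" where
  "is_ideal I \<longleftrightarrow> 0 \<in> I \<and> (\<forall>x\<in>I. \<forall>y\<in>I. x + y \<in> I) \<and> (\<forall>r. \<forall>x\<in>I. r * x \<in> I)"

definition maximal_ideal :: "'a::comm_ring_1 set \<Rightarrow> bool" where
  "maximal_ideal I \<longleftrightarrow> is_ideal I \<and> 1 \<notin> I \<and>
     (\<forall>J. is_ideal J \<and> I \<subseteq> J \<longrightarrow> J = I \<or> 1 \<in> J)"

definition jac :: "'a::comm_ring_1 set" where
  "jac = \<Inter>{I. maximal_ideal I}"

definition ideal_gen :: "'a::comm_ring_1 set \<Rightarrow> 'a set" where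
  "ideal_gen X = \<Inter>{I. is_ideal I \<and> X \<subseteq> I}"

definition ideal_prod :: "'a::comm_ring_1 set \<Rightarrow> 'a set \<Rightarrow> 'a set" where
  "ideal_prod I J = ideal_gen {x * y |x y. x \<in> I \<and> y \<in> J}"

fun ideal_power :: "'a::comm_ring_1 set \<Rightarrow> nat \<Rightarrow> 'a set" where
  "ideal_power I 0 = UNIV"
| "ideal_power I (Suc n) = ideal_prod I (ideal_power I n)"

definition finite_index :: "'a::comm_ring_1 set \<Rightarrow> bool" where
  "finite_index I \<longleftrightarrow> finite ((\<lambda>x. (+) x ` I) ` UNIV)"

text \<open>Adic ring: Jac^n of finite index for n \<ge> 1, and the canonical map
  Omega -> lim Omega/Jac^n is bijective (separated and complete).\<close>
definition adic_ring :: "'a::comm_ring_1 itself \<Rightarrow> bool" where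
  "adic_ring _ \<longleftrightarrow>
     (\<forall>n\<ge>1. finite_index (ideal_power (jac::'a set) n)) \<and>
     (\<Inter>n. ideal_power (jac::'a set) n) = {0} \<and>
     (\<forall>a::nat \<Rightarrow> 'a. (\<forall>n. a (Suc n) - a n \<in> ideal_power jac n) \<longrightarrow>
        (\<exists>x. \<forall>n. x - a n \<in> ideal_power jac n))"

text \<open>Z_l = lim Z/l^n, elements as compatible sequences of residues.\<close>
definition zl_carrier :: "nat \<Rightarrow> (nat \<Rightarrow> int) set" where
  "zl_carrier l = {a. \<forall>n. 0 \<le> a n \<and> a n < int l ^ n \<and> a (Suc n) mod int l ^ n = a n}"

definition zl_add :: "nat \<Rightarrow> (nat \<Rightarrow> int) \<Rightarrow> (nat \<Rightarrow> int) \<Rightarrow> nat \<Rightarrow> int" where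
  "zl_add l a b = (\<lambda>n. (a n + b n) mod int l ^ n)"

definition zl_mul :: "nat \<Rightarrow> (nat \<Rightarrow> int) \<Rightarrow> (nat \<Rightarrow> int) \<Rightarrow> nat \<Rightarrow> int" where
  "zl_mul l a b = (\<lambda>n. (a n * b n) mod int l ^ n)"

definition zl_one :: "nat \<Rightarrow> nat \<Rightarrow> int" where
  "zl_one l = (\<lambda>n. 1 mod int l ^ n)"

definition zl_algebra :: "nat \<Rightarrow> 'a::comm_ring_1 itself \<Rightarrow> bool" where
  "zl_algebra l _ \<longleftrightarrow> (\<exists>\<phi> :: (nat \<Rightarrow> int) \<Rightarrow> 'a.
     \<phi> (zl_one l) = 1 \<and>
     (\<forall>a\<in>zl_carrier l. \<forall>b\<in>zl_carrier l.
        \<phi> (zl_add l a b) = \<phi> a + \<phi> b \<and> \<phi> (zl_mul l a b) = \<phi> a * \<phi> b))"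

definition lev :: "nat \<Rightarrow> nat \<Rightarrow> nat \<Rightarrow> nat" where
  "lev k l n = k * l ^ n"

text \<open>Gamma_{k l^\<infinity>}: compatible residues; Gal(F_{q^N}/F) = Z/N with the
  arithmetic Frobenius x \<mapsto> x^q corresponding to 1.\<close>
definition Gamma_set :: "nat \<Rightarrow> nat \<Rightarrow> (nat \<Rightarrow> nat) set" where
  "Gamma_set k l = {g. \<forall>n. g n < lev k l n \<and> g (Suc n) mod lev k l n = g n}"

text \<open>Image of the geometric Frobenius x \<mapsto> x^(1/q), i.e. -1.\<close>
definition frob_geom :: "nat \<Rightarrow> nat \<Rightarrow> nat \<Rightarrow> nat" where
  "frob_geom k l = (\<lambda>n. (lev k l n - 1) mod lev k l n)"

definition gam_inv :: "nat \<Rightarrow> nat \<Rightarrow> (nat \<Rightarrow> nat) \<Rightarrow> nat \<Rightarrow> nat" where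
  "gam_inv k l g = (\<lambda>n. (lev k l n - g n) mod lev k l n)"

text \<open>Group ring Omega[Z/N]: functions supported on {0..<N}.\<close>
definition supported :: "nat \<Rightarrow> (nat \<Rightarrow> 'a::zero) \<Rightarrow> bool" where
  "supported N x \<longleftrightarrow> (\<forall>i\<ge>N. x i = 0)"

definition gr_mul :: "nat \<Rightarrow> (nat \<Rightarrow> 'a::comm_ring_1) \<Rightarrow> (nat \<Rightarrow> 'a) \<Rightarrow> nat \<Rightarrow> 'a" where
  "gr_mul N a b = (\<lambda>i. if i < N then (\<Sum>j<N. a j * b ((N + i - j) mod N)) else 0)"

definition gr_delta :: "nat \<Rightarrow> nat \<Rightarrow> nat \<Rightarrow> 'a::comm_ring_1" where
  "gr_delta N m = (\<lambda>i. if i = m mod N then 1 else 0)"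

definition gr_proj :: "nat \<Rightarrow> nat \<Rightarrow> (nat \<Rightarrow> 'a::comm_ring_1) \<Rightarrow> nat \<Rightarrow> 'a" where
  "gr_proj N M x = (\<lambda>i. if i < M then (\<Sum>j\<in>{j. j < N \<and> j mod M = i}. x j) else 0)"

definition gr_eval :: "nat \<Rightarrow> 'a::comm_ring_1 poly \<Rightarrow> nat \<Rightarrow> nat \<Rightarrow> 'a" where
  "gr_eval N f g = (\<lambda>i. \<Sum>d\<le>degree f. coeff f d * gr_delta N (d * g) i)"

text \<open>Omega[[Gamma]] = lim_{J,U} Omega/J[Gamma/U], computed along the cofinal system
  (Jac^(n+1), ker(Gamma -> Z/(k l^n))); elements are families of representatives.\<close>
definition iwasawa :: "nat \<Rightarrow> nat \<Rightarrow> (nat \<Rightarrow> nat \<Rightarrow> 'a::comm_ring_1) set" where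
  "iwasawa k l = {x. \<forall>n. supported (lev k l n) (x n) \<and>
      (\<forall>i < lev k l n. gr_proj (lev k l (Suc n)) (lev k l n) (x (Suc n)) i - x n i
           \<in> ideal_power jac (Suc n))}"

text \<open>(Omega/Jac)[[Gamma]] = lim_n (Omega/Jac)[Z/(k l^n)] (Omega/Jac is finite, discrete),
  elements represented by Omega-valued families modulo Jac.\<close>
definition red_iwasawa :: "nat \<Rightarrow> nat \<Rightarrow> (nat \<Rightarrow> nat \<Rightarrow> 'a::comm_ring_1) set" where
  "red_iwasawa k l = {y. \<forall>n. supported (lev k l n) (y n) \<and>
      (\<forall>i < lev k l n. gr_proj (lev k l (Suc n)) (lev k l n) (y (Suc n)) i - y n i \<in> jac)}"

definition red_zero :: "nat \<Rightarrow> nat \<Rightarrow> (nat \<Rightarrow> nat \<Rightarrow> 'a::comm_ring_1) \<Rightarrow> bool" where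
  "red_zero k l y \<longleftrightarrow> (\<forall>n. \<forall>i < lev k l n. y n i \<in> jac)"

definition P_set :: "'a::comm_ring_1 poly set" where
  "P_set = {f. coeff f 0 dvd 1}"

definition S_set :: "nat \<Rightarrow> nat \<Rightarrow> (nat \<Rightarrow> nat \<Rightarrow> 'a::comm_ring_1) set" where
  "S_set k l = {x \<in> iwasawa k l. \<forall>y \<in> red_iwasawa k l.
      red_zero k l (\<lambda>n. gr_mul (lev k l n) (x n) (y n)) \<longrightarrow> red_zero k l y}"

definition poly_to_iwasawa :: "nat \<Rightarrow> nat \<Rightarrow> 'a::comm_ring_1 poly \<Rightarrow> nat \<Rightarrow> nat \<Rightarrow> 'a" where
  "poly_to_iwasawa k l f = (\<lambda>n. gr_eval (lev k l n) f (gam_inv k l (frob_geom k l) n))"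

end

theory Submission
  imports Defs "HOL-Number_Theory.Modular_Inverse"
begin

text \<open>Fix a maximal ideal \<open>M\<close>. As \<open>\<Omega>/M\<close> is finite and a \<open>\<int>\<^sub>l\<close>-algebra, \<open>l \<in> M\<close>. Let \<open>y\<close> be
  killed modulo \<open>Jac(\<Omega>)\<close> by the image of \<open>f\<close>. At each level \<open>\<int>/k l\<^sup>n\<close> the entries of \<open>y\<close> then satisfy
  modulo \<open>M\<close> a linear recurrence with the coefficients of \<open>f\<close>, whose constant term is a unit, so
  by pigeonhole they are periodic modulo \<open>M\<close> with a period \<open>\<delta>\<close> bounded independently of the level.
  Once \<open>l\<^sup>n\<^sup>+\<^sup>1 > \<delta>\<close>, translation by \<open>k l\<^sup>n\<close> is a multiple of \<open>\<delta>\<close> modulo \<open>k l\<^sup>n\<^sup>+\<^sup>1\<close>, so the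
  projection to level \<open>n\<close> is \<open>l\<close> times an entry, hence lies in \<open>M\<close>; compatibility of the levels
  then gives \<open>y \<equiv> 0\<close> modulo \<open>M\<close> everywhere.\<close>

lemma is_ideal_0: "is_ideal I \<Longrightarrow> 0 \<in> I"
  by (simp add: is_ideal_def)

lemma is_ideal_add: "is_ideal I \<Longrightarrow> x \<in> I \<Longrightarrow> y \<in> I \<Longrightarrow> x + y \<in> I"
  by (simp add: is_ideal_def)

lemma is_ideal_mult_left: "is_ideal I \<Longrightarrow> x \<in> I \<Longrightarrow> r * x \<in> I"
  by (simp add: is_ideal_def)

lemma is_ideal_mult_right: "is_ideal I \<Longrightarrow> x \<in> I \<Longrightarrow> x * r \<in> I"
  by (metis is_ideal_mult_left mult.commute)

lemma is_ideal_uminus: "is_ideal I \<Longrightarrow> x \<in> I \<Longrightarrow> - x \<in> I"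
  using is_ideal_mult_left[of I x "-1"] by simp

lemma is_ideal_diff: "is_ideal I \<Longrightarrow> x \<in> I \<Longrightarrow> y \<in> I \<Longrightarrow> x - y \<in> I"
  using is_ideal_add[of I x "- y"] is_ideal_uminus[of I y] by simp

lemma is_ideal_diff_commute: "is_ideal I \<Longrightarrow> x - y \<in> I \<Longrightarrow> y - x \<in> I"
  using is_ideal_uminus[of I "x - y"] by simp

lemma is_ideal_diff_trans: "is_ideal I \<Longrightarrow> x - y \<in> I \<Longrightarrow> y - z \<in> I \<Longrightarrow> x - z \<in> I"
  using is_ideal_add[of I "x - y" "y - z"] by simp

lemma is_ideal_sum: "is_ideal I \<Longrightarrow> (\<And>a. a \<in> A \<Longrightarrow> g a \<in> I) \<Longrightarrow> sum g A \<in> I"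
  by (induction A rule: infinite_finite_induct) (simp_all add: is_ideal_0 is_ideal_add)

lemma is_ideal_Inter: "(\<And>I. I \<in> \<I> \<Longrightarrow> is_ideal I) \<Longrightarrow> is_ideal (\<Inter>\<I>)"
  by (simp add: is_ideal_def)

lemma is_ideal_ideal_gen: "is_ideal (ideal_gen X)"
  unfolding ideal_gen_def by (rule is_ideal_Inter) blast

lemma ideal_gen_subset: "is_ideal I \<Longrightarrow> X \<subseteq> I \<Longrightarrow> ideal_gen X \<subseteq> I"
  unfolding ideal_gen_def by blast

lemma is_ideal_ideal_power_Suc: "is_ideal (ideal_power I (Suc n))"
  by (simp add: ideal_prod_def is_ideal_ideal_gen)

lemma ideal_power_Suc_subset: "is_ideal I \<Longrightarrow> ideal_power I (Suc n) \<subseteq> I"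
  unfolding ideal_power.simps ideal_prod_def
  by (rule ideal_gen_subset) (auto intro: is_ideal_mult_right)

lemma maximal_ideal_is_ideal: "maximal_ideal M \<Longrightarrow> is_ideal M"
  by (simp add: maximal_ideal_def)

lemma is_ideal_jac: "is_ideal jac"
  unfolding jac_def by (rule is_ideal_Inter) (simp add: maximal_ideal_is_ideal)

lemma jac_subset_maximal_ideal: "maximal_ideal M \<Longrightarrow> jac \<subseteq> M"
  unfolding jac_def by blast

lemma maximal_ideal_prime:
  assumes max: "maximal_ideal M" and "x * y \<in> M" "x \<notin> M"
  shows "y \<in> M"
proof -
  have M: "is_ideal M" using max by (rule maximal_ideal_is_ideal)
  define J where "J = {m + r * x |m r. m \<in> M}"
  have "is_ideal J"
    unfolding is_ideal_def J_def
  proof (intro conjI ballI allI)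
    show "0 \<in> {m + r * x |m r. m \<in> M}"
      using is_ideal_0[OF M] by (intro CollectI exI[of _ 0]) simp
  next
    fix a b assume "a \<in> {m + r * x |m r. m \<in> M}" "b \<in> {m + r * x |m r. m \<in> M}"
    then obtain m1 r1 m2 r2 where "a = m1 + r1 * x" "b = m2 + r2 * x" "m1 \<in> M" "m2 \<in> M"
      by blast
    then show "a + b \<in> {m + r * x |m r. m \<in> M}"
      by (intro CollectI exI[of _ "m1 + m2"] exI[of _ "r1 + r2"])
         (simp add: is_ideal_add[OF M] algebra_simps)
  next
    fix s a assume "a \<in> {m + r * x |m r. m \<in> M}"
    then obtain m1 r1 where "a = m1 + r1 * x" "m1 \<in> M" by blast
    then have "s * a = s * m1 + (s * r1) * x" by (simp add: algebra_simps)
    then show "s * a \<in> {m + r * x |m r. m \<in> M}"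
      using is_ideal_mult_left[OF M \<open>m1 \<in> M\<close>, of s] by blast
  qed
  moreover have "M \<subseteq> J"
  proof
    fix z assume "z \<in> M"
    then show "z \<in> J" unfolding J_def by (intro CollectI exI[of _ z] exI[of _ 0]) simp
  qed
  moreover have "x \<in> J"
    unfolding J_def using is_ideal_0[OF M] by (intro CollectI exI[of _ 0] exI[of _ 1]) simp
  ultimately have "1 \<in> J" using max \<open>x \<notin> M\<close> unfolding maximal_ideal_def by blast
  then obtain m r where "1 = m + r * x" "m \<in> M" unfolding J_def by blast
  then have "y = m * y + r * (x * y)" by (metis mult_1 distrib_right mult.assoc)
  then show ?thesis
    using is_ideal_add[OF M is_ideal_mult_right[OF M \<open>m \<in> M\<close>] is_ideal_mult_left[OF M \<open>x * y \<in> M\<close>]]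
    by metis
qed

lemma maximal_ideal_power_mem:
  assumes "maximal_ideal M" shows "x ^ n \<in> M \<Longrightarrow> x \<in> M"
  using assms by (induction n) (auto simp: maximal_ideal_def intro: maximal_ideal_prime[OF assms])

definition finite_residue_system :: "'a::comm_ring_1 set \<Rightarrow> 'a set \<Rightarrow> bool" where
  "finite_residue_system I R \<longleftrightarrow> finite R \<and> (\<forall>x. \<exists>r\<in>R. x - r \<in> I)"

lemma finite_index_residue_system:
  assumes I: "is_ideal I" and "finite_index I"
  shows "\<exists>R. finite_residue_system I R"
proof -
  define C where "C = (\<lambda>x. (+) x ` I) ` UNIV"
  have "finite C" using \<open>finite_index I\<close> unfolding finite_index_def C_def .
  have "\<exists>r\<in>(\<lambda>c. SOME z. z \<in> c) ` C. x - r \<in> I" for x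
  proof -
    have "x \<in> (+) x ` I" using is_ideal_0[OF I] by force
    then have "(SOME z. z \<in> (+) x ` I) \<in> (+) x ` I" by (rule someI)
    then obtain i where "i \<in> I" "(SOME z. z \<in> (+) x ` I) = x + i" by blast
    moreover have "(SOME z. z \<in> (+) x ` I) \<in> (\<lambda>c. SOME z. z \<in> c) ` C" unfolding C_def by blast
    ultimately show ?thesis using is_ideal_uminus[OF I] by force
  qed
  then show ?thesis using \<open>finite C\<close> unfolding finite_residue_system_def by blast
qed

lemma finite_residue_system_rep:
  assumes "finite_residue_system I R"
  obtains rep where "\<And>x. rep x \<in> R" and "\<And>x. x - rep x \<in> I"
proof -
  have "\<forall>x. \<exists>r. r \<in> R \<and> x - r \<in> I"
    using assms unfolding finite_residue_system_def by blast
  from choice[OF this] obtain rep where "\<forall>x. rep x \<in> R \<and> x - rep x \<in> I" ..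
  then show ?thesis using that by blast
qed

lemma finite_residue_system_mono:
  "finite_residue_system I R \<Longrightarrow> I \<subseteq> J \<Longrightarrow> finite_residue_system J R"
  unfolding finite_residue_system_def by blast

lemma adic_ring_finite_residue_system:
  assumes "adic_ring TYPE('a::comm_ring_1)" and "maximal_ideal (M::'a set)"
  shows "\<exists>R. finite_residue_system M R"
proof -
  have "finite_index (ideal_power (jac::'a set) 1)"
    using assms(1) unfolding adic_ring_def by blast
  then obtain R where "finite_residue_system (ideal_power (jac::'a set) 1) R"
    using finite_index_residue_system is_ideal_ideal_power_Suc by (metis One_nat_def)
  moreover have "ideal_power (jac::'a set) 1 \<subseteq> M"
    using order_trans[OF ideal_power_Suc_subset[OF is_ideal_jac, of 0] jac_subset_maximal_ideal[OF assms(2)]]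
    by simp
  ultimately show ?thesis by (blast intro: finite_residue_system_mono)
qed

lemma finite_residue_system_of_nat_mem:
  assumes I: "is_ideal I" and R: "finite_residue_system I R"
  shows "\<exists>c>0. (of_nat c :: 'a::comm_ring_1) \<in> I"
proof -
  obtain rep where rep: "\<And>x. rep x \<in> R" "\<And>x. x - rep x \<in> I"
    using finite_residue_system_rep[OF R] by blast
  let ?g = "\<lambda>t. rep (of_nat t :: 'a)"
  have "card (?g ` {0..card R}) \<le> card R"
    using R rep(1) unfolding finite_residue_system_def by (intro card_mono) auto
  then have "\<not> inj_on ?g {0..card R}" by (intro pigeonhole) simp
  then obtain s t where "s < t" "?g s = ?g t"
    unfolding inj_on_def by (metis linorder_neqE_nat)
  moreover have "rep (of_nat s) - of_nat s \<in> I"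
    using is_ideal_diff_commute[OF I rep(2)] .
  ultimately have "of_nat t - (of_nat s :: 'a) \<in> I"
    using is_ideal_diff_trans[OF I rep(2)[of "of_nat t"]] by simp
  with \<open>s < t\<close> show ?thesis by (intro exI[of _ "t - s"]) simp
qed

definition zl_of_nat :: "nat \<Rightarrow> nat \<Rightarrow> nat \<Rightarrow> int" where
  "zl_of_nat l t = (\<lambda>n. int t mod int l ^ n)"

definition zl_inverse :: "nat \<Rightarrow> nat \<Rightarrow> nat \<Rightarrow> int" where
  "zl_inverse l b = (\<lambda>n. modular_inverse (int l ^ n) (int b))"

lemma zl_of_nat_carrier: "0 < l \<Longrightarrow> zl_of_nat l t \<in> zl_carrier l"
  unfolding zl_of_nat_def zl_carrier_def by (auto simp: mod_mod_cancel le_imp_power_dvd)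

lemma zl_add_of_nat: "zl_add l (zl_of_nat l s) (zl_of_nat l t) = zl_of_nat l (s + t)"
  unfolding zl_of_nat_def zl_add_def by (simp add: mod_add_eq)

lemma zl_one_eq_of_nat: "zl_one l = zl_of_nat l 1"
  unfolding zl_one_def zl_of_nat_def by simp

lemma zl_inverse_carrier:
  assumes "0 < l" and "coprime b l"
  shows "zl_inverse l b \<in> zl_carrier l"
  unfolding zl_carrier_def
proof (intro CollectI allI conjI)
  fix n
  have pos: "0 < int l ^ n" using \<open>0 < l\<close> by simp
  then show "0 \<le> zl_inverse l b n" "zl_inverse l b n < int l ^ n"
    unfolding zl_inverse_def by (simp_all add: modular_inverse_int_nonneg modular_inverse_int_less)
  have "coprime (int b) (int l ^ Suc n)" using \<open>coprime b l\<close> by simp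
  then have "[int b * zl_inverse l b (Suc n) = 1] (mod int l ^ n)"
    unfolding zl_inverse_def by (rule cong_dvd_modulus[OF cong_modular_inverse1]) simp
  then have "[int b * (zl_inverse l b (Suc n) mod int l ^ n) = 1] (mod int l ^ n)"
    unfolding cong_def by (simp add: mod_mult_right_eq)
  then show "zl_inverse l b (Suc n) mod int l ^ n = zl_inverse l b n"
    unfolding zl_inverse_def using pos by (intro modular_inverse_int_eqI[symmetric]) simp_all
qed

lemma zl_mul_of_nat_inverse:
  assumes "coprime b l"
  shows "zl_mul l (zl_of_nat l b) (zl_inverse l b) = zl_one l"
proof
  fix n
  have "coprime (int b) (int l ^ n)" using assms by simp
  then have "[int b * zl_inverse l b n = 1] (mod int l ^ n)"
    unfolding zl_inverse_def by (rule cong_modular_inverse1)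
  then show "zl_mul l (zl_of_nat l b) (zl_inverse l b) n = zl_one l n"
    unfolding zl_mul_def zl_of_nat_def zl_one_def cong_def by (simp add: mod_mult_left_eq)
qed

lemma zl_hom_of_nat:
  assumes "0 < l" and one: "\<phi> (zl_one l) = (1::'a::comm_ring_1)"
    and add: "\<forall>a\<in>zl_carrier l. \<forall>b\<in>zl_carrier l. \<phi> (zl_add l a b) = \<phi> a + \<phi> b"
  shows "\<phi> (zl_of_nat l t) = of_nat t"
proof (induction t)
  case 0
  have "\<phi> (zl_add l (zl_of_nat l 0) (zl_of_nat l 0)) = \<phi> (zl_of_nat l 0) + \<phi> (zl_of_nat l 0)"
    using add zl_of_nat_carrier[OF \<open>0 < l\<close>] by blast
  then show ?case by (simp add: zl_add_of_nat)
next
  case (Suc t)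
  have "\<phi> (zl_add l (zl_of_nat l t) (zl_of_nat l 1)) = \<phi> (zl_of_nat l t) + \<phi> (zl_of_nat l 1)"
    using add zl_of_nat_carrier[OF \<open>0 < l\<close>] by blast
  then show ?case using Suc one by (simp add: zl_add_of_nat zl_one_eq_of_nat)
qed

lemma zl_algebra_of_nat_unit:
  assumes "zl_algebra l TYPE('a::comm_ring_1)" and "0 < l" and "coprime b l"
  shows "(of_nat b :: 'a) dvd 1"
proof -
  obtain \<phi> :: "(nat \<Rightarrow> int) \<Rightarrow> 'a" where one: "\<phi> (zl_one l) = 1"
    and hom: "\<forall>a\<in>zl_carrier l. \<forall>b\<in>zl_carrier l.
                \<phi> (zl_add l a b) = \<phi> a + \<phi> b \<and> \<phi> (zl_mul l a b) = \<phi> a * \<phi> b"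
    using assms(1) unfolding zl_algebra_def by blast
  have "\<phi> (zl_of_nat l b) = of_nat b"
    using zl_hom_of_nat[where \<phi>=\<phi>, OF \<open>0 < l\<close> one] hom by blast
  moreover have "\<phi> (zl_mul l (zl_of_nat l b) (zl_inverse l b)) = \<phi> (zl_of_nat l b) * \<phi> (zl_inverse l b)"
    using hom zl_of_nat_carrier[OF \<open>0 < l\<close>] zl_inverse_carrier[OF assms(2,3)] by blast
  ultimately show ?thesis
    using zl_mul_of_nat_inverse[OF \<open>coprime b l\<close>] one by (metis dvdI)
qed

lemma prime_multiplicity_decompose:
  fixes l c :: nat
  assumes "prime l" and "0 < c"
  obtains w where "c = l ^ multiplicity l c * w" and "\<not> l dvd w"
proof -
  have "c \<noteq> 0" using \<open>0 < c\<close> by simp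
  moreover have "\<not> is_unit l" using \<open>prime l\<close> not_prime_unit by blast
  ultimately show ?thesis using multiplicity_decompose' that by blast
qed

text \<open>The residue field \<open>\<Omega>/M\<close> is a finite field receiving a ring map from \<open>\<int>\<^sub>l\<close>, in which
  all integers prime to \<open>l\<close> are units; so its characteristic is \<open>l\<close>.\<close>
lemma prime_mem_maximal_ideal:
  fixes l :: nat
  assumes "prime l" and "zl_algebra l TYPE('a::comm_ring_1)"
    and max: "maximal_ideal (M::'a set)" and "finite_residue_system M R"
  shows "(of_nat l :: 'a) \<in> M"
proof -
  have M: "is_ideal M" using max by (rule maximal_ideal_is_ideal)
  obtain c where "c > 0" and c: "(of_nat c :: 'a) \<in> M"
    using finite_residue_system_of_nat_mem[OF M assms(4)] by blast
  then obtain b where cb: "c = l ^ multiplicity l c * b" and "\<not> l dvd b"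
    using prime_multiplicity_decompose[OF \<open>prime l\<close>] by blast
  then have "coprime b l" using \<open>prime l\<close> prime_imp_coprime coprime_commute by blast
  then obtain v where v: "1 = (of_nat b :: 'a) * v"
    using zl_algebra_of_nat_unit[OF assms(2) prime_gt_0_nat[OF \<open>prime l\<close>]] by (meson dvdE)
  have "(of_nat c :: 'a) * v = of_nat l ^ multiplicity l c * (of_nat b * v)"
    by (subst cb) (simp add: mult.assoc)
  then have "(of_nat l :: 'a) ^ multiplicity l c = of_nat c * v"
    by (simp flip: v)
  then have "(of_nat l :: 'a) ^ multiplicity l c \<in> M" using is_ideal_mult_right[OF M c] by simp
  then show ?thesis using maximal_ideal_power_mem[OF max] by blast
qed

lemma periodic_add_mult:
  fixes Y :: "nat \<Rightarrow> 'a"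
  assumes "\<And>u. Y (u + N) = Y u"
  shows "Y (x + c * N) = Y x"
proof (induction c)
  case (Suc c)
  have "Y (x + Suc c * N) = Y ((x + c * N) + N)" by (simp add: algebra_simps)
  then show ?case using Suc assms by simp
qed simp

lemma shift_invariant_mult:
  fixes Y :: "nat \<Rightarrow> 'a::comm_ring_1"
  assumes I: "is_ideal I" and shift: "\<And>j. Y (j + \<delta>) - Y j \<in> I"
  shows "Y (j + t * \<delta>) - Y j \<in> I"
proof (induction t)
  case (Suc t)
  have "Y ((j + t * \<delta>) + \<delta>) - Y (j + t * \<delta>) \<in> I" by (rule shift)
  then have "Y (j + Suc t * \<delta>) - Y (j + t * \<delta>) \<in> I" by (simp add: algebra_simps)
  then show ?case using is_ideal_diff_trans[OF I _ Suc] by blast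
qed (simp add: is_ideal_0[OF I])

text \<open>A linear recurrence modulo \<open>I\<close> whose constant coefficient is a unit determines each term
  from the \<open>m\<close> preceding ones, so two positions with congruent windows stay congruent forever.\<close>
lemma linear_recurrence_window_agree:
  fixes Y a :: "nat \<Rightarrow> 'a::comm_ring_1"
  assumes I: "is_ideal I" and unit: "a 0 * b = 1"
    and rec: "\<And>u. m \<le> u \<Longrightarrow> (\<Sum>d\<le>m. a d * Y (u - d)) \<in> I"
    and "m \<le> u" "m \<le> v" and window: "\<And>d. d \<in> {1..m} \<Longrightarrow> Y (u - d) - Y (v - d) \<in> I"
  shows "Y (u + t) - Y (v + t) \<in> I"
proof -
  have step: "Y (u + s) - Y (v + s) \<in> I"
    if agree: "\<forall>d\<in>{1..m}. Y (u + s - d) - Y (v + s - d) \<in> I" for s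
  proof -
    have split: "(\<Sum>d\<le>m. a d * Y (w - d)) = a 0 * Y w + (\<Sum>d\<in>{1..m}. a d * Y (w - d))" for w
      by (simp add: atMost_atLeast0 sum.atLeast_Suc_atMost)
    have "a 0 * (Y (u + s) - Y (v + s))
        = (\<Sum>d\<le>m. a d * Y (u + s - d)) - (\<Sum>d\<le>m. a d * Y (v + s - d))
          - (\<Sum>d\<in>{1..m}. a d * (Y (u + s - d) - Y (v + s - d)))"
      unfolding split by (simp add: algebra_simps sum_subtractf)
    moreover have "(\<Sum>d\<in>{1..m}. a d * (Y (u + s - d) - Y (v + s - d))) \<in> I"
      using agree by (intro is_ideal_sum[OF I] is_ideal_mult_left[OF I]) blast
    ultimately have "a 0 * (Y (u + s) - Y (v + s)) \<in> I"
      using rec \<open>m \<le> u\<close> \<open>m \<le> v\<close> is_ideal_diff[OF I] by simp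
    then have "b * (a 0 * (Y (u + s) - Y (v + s))) \<in> I" by (rule is_ideal_mult_left[OF I])
    then show ?thesis using unit by (simp add: mult.assoc[symmetric] mult.commute[of b])
  qed
  have "\<forall>d\<in>{1..m}. Y (u + s - d) - Y (v + s - d) \<in> I" for s
  proof (induction s)
    case 0
    then show ?case using window by simp
  next
    case (Suc s)
    show ?case
    proof
      fix d assume d: "d \<in> {1..m}"
      show "Y (u + Suc s - d) - Y (v + Suc s - d) \<in> I"
      proof (cases "d = 1")
        case True
        then show ?thesis using step[OF Suc] by simp
      next
        case False
        with d have "d - 1 \<in> {1..m}" by auto
        with Suc have "Y (u + s - (d - 1)) - Y (v + s - (d - 1)) \<in> I" by blast
        moreover have "u + s - (d - 1) = u + Suc s - d" "v + s - (d - 1) = v + Suc s - d"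
          using d False by auto
        ultimately show ?thesis by simp
      qed
    qed
  qed
  then show ?thesis using step by blast
qed

text \<open>Pigeonhole on the windows of length \<open>m\<close>, read in the finite residue system, makes \<open>Y\<close>
  eventually periodic modulo \<open>I\<close>; being periodic on the nose, it is then periodic modulo \<open>I\<close>
  from the start.\<close>
lemma linear_recurrence_periodic_mod:
  fixes Y a :: "nat \<Rightarrow> 'a::comm_ring_1"
  assumes I: "is_ideal I" and R: "finite_residue_system I R" and unit: "a 0 * b = 1"
    and rec: "\<And>u. m \<le> u \<Longrightarrow> (\<Sum>d\<le>m. a d * Y (u - d)) \<in> I"
    and per: "\<And>u. Y (u + N) = Y u" and "0 < N"
  shows "\<exists>\<delta>>0. \<delta> \<le> card R ^ m \<and> (\<forall>j. Y (j + \<delta>) - Y j \<in> I)"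
proof -
  obtain rep where rep: "\<And>x. rep x \<in> R" "\<And>x. x - rep x \<in> I"
    using finite_residue_system_rep[OF R] by blast
  define window where "window u = map (\<lambda>d. rep (Y (u - d))) [1..<Suc m]" for u
  have "window ` {m..m + card R ^ m} \<subseteq> {xs. set xs \<subseteq> R \<and> length xs = m}"
    using rep(1) unfolding window_def by auto
  moreover have "finite R" using R unfolding finite_residue_system_def ..
  ultimately have "card (window ` {m..m + card R ^ m}) \<le> card {xs. set xs \<subseteq> R \<and> length xs = m}"
    by (intro card_mono finite_lists_length_eq)
  also have "\<dots> = card R ^ m" using \<open>finite R\<close> by (rule card_lists_length_eq)
  finally have "card (window ` {m..m + card R ^ m}) \<le> card R ^ m" .
  then have "\<not> inj_on window {m..m + card R ^ m}" by (intro pigeonhole) simp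
  then obtain x y where "x \<in> {m..m + card R ^ m}" "y \<in> {m..m + card R ^ m}" "x \<noteq> y"
    and "window x = window y" unfolding inj_on_def by blast
  then obtain u v where uv: "m \<le> u" "u < v" "v \<le> m + card R ^ m" "window u = window v"
    by (cases "x < y") (auto simp: not_less_iff_gr_or_eq)
  have "Y (u - d) - Y (v - d) \<in> I" if "d \<in> {1..m}" for d
  proof -
    have "\<forall>d\<in>set [1..<Suc m]. rep (Y (u - d)) = rep (Y (v - d))"
      using uv(4) unfolding window_def map_eq_conv .
    then have "rep (Y (u - d)) = rep (Y (v - d))"
      using that by (simp del: upt_Suc)
    moreover have "rep (Y (v - d)) - Y (v - d) \<in> I" using is_ideal_diff_commute[OF I rep(2)] .
    ultimately show ?thesis using is_ideal_diff_trans[OF I rep(2)[of "Y (u - d)"]] by simp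
  qed
  then have agree: "Y (u + t) - Y (v + t) \<in> I" for t
    using linear_recurrence_window_agree[OF I unit rec] uv by simp
  have "Y (j + (v - u)) - Y j \<in> I" for j
  proof -
    have "u \<le> u * N" using \<open>0 < N\<close> by simp
    then have "u + (j + u * N - u) = j + u * N" "v + (j + u * N - u) = (j + (v - u)) + u * N"
      using uv(2) by linarith+
    moreover have "Y (u + (j + u * N - u)) - Y (v + (j + u * N - u)) \<in> I" by (rule agree)
    ultimately have "Y j - Y (j + (v - u)) \<in> I" by (simp only: periodic_add_mult[where Y=Y, OF per])
    then show ?thesis by (rule is_ideal_diff_commute[OF I])
  qed
  moreover have "0 < v - u" "v - u \<le> card R ^ m" using uv by auto
  ultimately show ?thesis by blast
qed

lemma shift_multiple_cong:
  fixes l \<delta> k n :: nat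
  assumes "prime l" and "0 < \<delta>" and "\<delta> < l ^ Suc n"
  shows "\<exists>t. [t * \<delta> = k * l ^ n] (mod k * l ^ Suc n)"
proof -
  obtain e w where \<delta>: "\<delta> = l ^ e * w" and "\<not> l dvd w"
    using prime_multiplicity_decompose[OF \<open>prime l\<close> \<open>0 < \<delta>\<close>] by blast
  have "0 < w" using \<open>0 < \<delta>\<close> unfolding \<delta> by simp
  then have "l ^ e \<le> \<delta>" unfolding \<delta> by simp
  then have "l ^ e < l ^ Suc n" using \<open>\<delta> < l ^ Suc n\<close> by linarith
  then have "e < Suc n" by (rule power_less_imp_less_exp[OF prime_gt_1_nat[OF \<open>prime l\<close>]])
  then have "e \<le> n" by simp
  have "coprime w l" using \<open>prime l\<close> \<open>\<not> l dvd w\<close> prime_imp_coprime coprime_commute by blast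
  then obtain s where "[w * s = 1] (mod l)" using cong_solve_coprime_nat by auto
  then have "(w * s) mod l = 1 mod l" unfolding cong_def .
  then have "[k * l ^ n * (w * s) = k * l ^ n * 1] (mod k * l ^ n * l)"
    unfolding cong_def by (simp only: mod_mult_mult1)
  then have "[k * l ^ n * (w * s) = k * l ^ n] (mod k * l ^ Suc n)"
    by (simp add: mult_ac)
  moreover have "k * l ^ (n - e) * s * \<delta> = k * l ^ n * (w * s)"
  proof -
    have "k * l ^ (n - e) * s * \<delta> = k * (l ^ (n - e) * l ^ e) * (w * s)"
      unfolding \<delta> by (simp add: mult_ac)
    also have "l ^ (n - e) * l ^ e = l ^ n" using \<open>e \<le> n\<close> by (simp flip: power_add)
    finally show ?thesis .
  qed
  ultimately have "[k * l ^ (n - e) * s * \<delta> = k * l ^ n] (mod k * l ^ Suc n)"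
    by (simp only:)
  then show ?thesis ..
qed

lemma shift_invariant_level_shift:
  fixes y :: "nat \<Rightarrow> 'a::comm_ring_1" and l k n \<delta> :: nat
  assumes I: "is_ideal I" and "prime l" and "0 < \<delta>" and "\<delta> < l ^ Suc n"
    and shift: "\<And>j. y ((j + \<delta>) mod (k * l ^ Suc n)) - y (j mod (k * l ^ Suc n)) \<in> I"
  shows "y ((j + k * l ^ n) mod (k * l ^ Suc n)) - y (j mod (k * l ^ Suc n)) \<in> I"
proof -
  obtain t where "[t * \<delta> = k * l ^ n] (mod k * l ^ Suc n)"
    using shift_multiple_cong[OF assms(2-4)] by blast
  then have "[j + t * \<delta> = j + k * l ^ n] (mod k * l ^ Suc n)" by (rule cong_add[OF cong_refl])
  then have "(j + t * \<delta>) mod (k * l ^ Suc n) = (j + k * l ^ n) mod (k * l ^ Suc n)"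
    unfolding cong_def .
  moreover have "y ((j + t * \<delta>) mod (k * l ^ Suc n)) - y (j mod (k * l ^ Suc n)) \<in> I"
    using shift_invariant_mult[where Y="\<lambda>j. y (j mod (k * l ^ Suc n))", OF I] shift by blast
  ultimately show ?thesis by simp
qed

lemma residues_in_class_eq:
  fixes N l i :: nat
  assumes "0 < N" and "i < N"
  shows "{j. j < l * N \<and> j mod N = i} = (\<lambda>c. i + c * N) ` {..<l}"
proof
  show "(\<lambda>c. i + c * N) ` {..<l} \<subseteq> {j. j < l * N \<and> j mod N = i}"
  proof
    fix j assume "j \<in> (\<lambda>c. i + c * N) ` {..<l}"
    then obtain c where "c < l" "j = i + c * N" by blast
    moreover have "i + c * N < Suc c * N" using \<open>i < N\<close> by simp
    moreover have "Suc c * N \<le> l * N" using \<open>c < l\<close> by (intro mult_le_mono1) simp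
    ultimately show "j \<in> {j. j < l * N \<and> j mod N = i}" using assms by simp
  qed
next
  show "{j. j < l * N \<and> j mod N = i} \<subseteq> (\<lambda>c. i + c * N) ` {..<l}"
  proof
    fix j assume j: "j \<in> {j. j < l * N \<and> j mod N = i}"
    then have "j div N < l" using \<open>0 < N\<close> by (simp add: div_less_iff_less_mult)
    moreover have "j = i + j div N * N" using j mod_div_mult_eq[of j N] by simp
    ultimately show "j \<in> (\<lambda>c. i + c * N) ` {..<l}" by blast
  qed
qed

text \<open>A class that is invariant modulo \<open>I\<close> under translation by \<open>N\<close> projects to \<open>l\<close> congruent
  summands, hence into \<open>I\<close> once \<open>l \<in> I\<close>.\<close>
lemma gr_proj_mem_if_shift_invariant:
  fixes y :: "nat \<Rightarrow> 'a::comm_ring_1" and l N i :: nat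
  assumes I: "is_ideal I" and "(of_nat l :: 'a) \<in> I" and "0 < N" and "i < N"
    and shift: "\<And>j. y ((j + N) mod (l * N)) - y (j mod (l * N)) \<in> I"
  shows "gr_proj (l * N) N y i \<in> I"
proof -
  define Y where "Y j = y (j mod (l * N))" for j
  have shiftY: "Y (j + N) - Y j \<in> I" for j using shift unfolding Y_def .
  have inj: "inj_on (\<lambda>c. i + c * N) {..<l}" using \<open>0 < N\<close> by (auto simp: inj_on_def)
  have "gr_proj (l * N) N y i = (\<Sum>j\<in>{j. j < l * N \<and> j mod N = i}. Y j)"
    unfolding gr_proj_def Y_def using \<open>i < N\<close> by (auto intro: sum.cong)
  also have "\<dots> = (\<Sum>c<l. Y (i + c * N))"
    unfolding residues_in_class_eq[OF \<open>0 < N\<close> \<open>i < N\<close>] sum.reindex[OF inj] by simp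
  also have "\<dots> = (\<Sum>c<l. Y (i + c * N) - Y i) + of_nat l * Y i"
    by (simp add: sum_subtractf)
  finally show ?thesis
    using is_ideal_add[OF I is_ideal_sum[OF I shift_invariant_mult[where Y=Y, OF I shiftY]]
        is_ideal_mult_right[OF I \<open>of_nat l \<in> I\<close>]]
    by simp
qed

lemma lev_pos: "0 < k \<Longrightarrow> 0 < l \<Longrightarrow> 0 < lev k l n"
  by (simp add: lev_def)

lemma lev_Suc: "lev k l (Suc n) = l * lev k l n"
  by (simp add: lev_def)

lemma gam_inv_frob_geom: "0 < lev k l n \<Longrightarrow> gam_inv k l (frob_geom k l) n = 1 mod lev k l n"
  unfolding gam_inv_def frob_geom_def by simp

text \<open>The image of a polynomial in \<open>\<Omega>[\<int>/N]\<close> under \<open>T \<mapsto> 1\<close>.\<close>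
definition gr_of_poly :: "nat \<Rightarrow> 'a::comm_ring_1 poly \<Rightarrow> nat \<Rightarrow> 'a" where
  "gr_of_poly N f = (\<lambda>i. \<Sum>d\<le>degree f. if i = d mod N then coeff f d else 0)"

lemma poly_to_iwasawa_eq:
  "0 < lev k l n \<Longrightarrow> poly_to_iwasawa k l f n = gr_of_poly (lev k l n) f"
  unfolding poly_to_iwasawa_def gam_inv_frob_geom gr_eval_def gr_delta_def gr_of_poly_def
  by (intro ext sum.cong refl) (simp add: mod_mult_right_eq)

lemma supported_gr_of_poly:
  assumes "0 < N"
  shows "supported N (gr_of_poly N f)"
  unfolding supported_def gr_of_poly_def
proof (intro allI impI sum.neutral ballI)
  fix i d assume "N \<le> i"
  moreover have "d mod N < N" using assms by simp
  ultimately show "(if i = d mod N then coeff f d else 0) = 0" by simp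
qed

lemma gr_proj_gr_of_poly:
  assumes "0 < N'" and "N dvd N'" and "i < N"
  shows "gr_proj N' N (gr_of_poly N' f) i = gr_of_poly N f i"
proof -
  define J where "J = {j. j < N' \<and> j mod N = i}"
  have "gr_proj N' N (gr_of_poly N' f) i = (\<Sum>j\<in>J. \<Sum>d\<le>degree f. if j = d mod N' then coeff f d else 0)"
    unfolding gr_proj_def gr_of_poly_def J_def using \<open>i < N\<close> by simp
  also have "\<dots> = (\<Sum>d\<le>degree f. if d mod N' \<in> J then coeff f d else 0)"
    by (subst sum.swap) (simp add: sum.delta J_def)
  also have "\<dots> = gr_of_poly N f i"
    unfolding gr_of_poly_def J_def using \<open>0 < N'\<close> \<open>N dvd N'\<close> by (auto simp: mod_mod_cancel intro!: sum.cong)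
  finally show ?thesis .
qed

lemma mod_diff_mods:
  fixes N u d :: nat
  assumes "0 < N" and "d \<le> u"
  shows "(N + u mod N - d mod N) mod N = (u - d) mod N"
proof -
  have "d mod N \<le> N + u mod N" using \<open>0 < N\<close> by (simp add: less_imp_le_nat trans_le_add1)
  then have "int ((N + u mod N - d mod N) mod N) = (int u mod int N - int d mod int N + int N) mod int N"
    by (simp add: of_nat_diff zmod_int algebra_simps)
  also have "\<dots> = (int u - int d) mod int N" by (simp add: mod_diff_eq)
  also have "\<dots> = int ((u - d) mod N)" using \<open>d \<le> u\<close> by (simp add: zmod_int of_nat_diff)
  finally show ?thesis by simp
qed

lemma gr_mul_gr_of_poly:
  assumes "0 < N" and "degree f \<le> u"
  shows "gr_mul N (gr_of_poly N f) y (u mod N) = (\<Sum>d\<le>degree f. coeff f d * y ((u - d) mod N))"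
proof -
  have "gr_mul N (gr_of_poly N f) y (u mod N)
      = (\<Sum>j<N. \<Sum>d\<le>degree f. if j = d mod N then coeff f d * y ((N + u mod N - j) mod N) else 0)"
    unfolding gr_mul_def gr_of_poly_def using \<open>0 < N\<close>
    by (auto simp: sum_distrib_right intro!: sum.cong)
  also have "\<dots> = (\<Sum>d\<le>degree f. coeff f d * y ((N + u mod N - d mod N) mod N))"
    using \<open>0 < N\<close> by (subst sum.swap) (simp add: sum.delta' eq_commute[of _ "_ mod N"])
  also have "\<dots> = (\<Sum>d\<le>degree f. coeff f d * y ((u - d) mod N))"
    using assms by (intro sum.cong refl) (simp add: mod_diff_mods)
  finally show ?thesis .
qed

lemma poly_to_iwasawa_in_iwasawa:
  assumes "0 < k" and "0 < l"
  shows "poly_to_iwasawa k l f \<in> iwasawa k l"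
  unfolding iwasawa_def
proof (intro CollectI allI conjI impI)
  fix n i
  have pos: "0 < lev k l n" "0 < lev k l (Suc n)" using assms by (simp_all add: lev_pos)
  then show "supported (lev k l n) (poly_to_iwasawa k l f n)"
    by (simp add: poly_to_iwasawa_eq supported_gr_of_poly)
  assume "i < lev k l n"
  then have "gr_proj (lev k l (Suc n)) (lev k l n) (poly_to_iwasawa k l f (Suc n)) i
      = poly_to_iwasawa k l f n i"
    using pos by (simp add: poly_to_iwasawa_eq gr_proj_gr_of_poly lev_Suc)
  then show "gr_proj (lev k l (Suc n)) (lev k l n) (poly_to_iwasawa k l f (Suc n)) i
      - poly_to_iwasawa k l f n i \<in> ideal_power jac (Suc n)"
    using is_ideal_0[OF is_ideal_ideal_power_Suc] by simp
qed

lemma red_iwasawa_mem_of_gr_proj_mem: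
  assumes "y \<in> red_iwasawa k l" and max: "maximal_ideal M" and "i < lev k l n"
    and "gr_proj (lev k l (Suc n)) (lev k l n) (y (Suc n)) i \<in> M"
  shows "y n i \<in> M"
proof -
  have "gr_proj (lev k l (Suc n)) (lev k l n) (y (Suc n)) i - y n i \<in> M"
    using assms(1,3) jac_subset_maximal_ideal[OF max] unfolding red_iwasawa_def by blast
  from is_ideal_diff[OF maximal_ideal_is_ideal[OF max] assms(4) this] show ?thesis by simp
qed

lemma red_iwasawa_mem_descend:
  assumes "y \<in> red_iwasawa k l" and max: "maximal_ideal M"
    and "\<forall>i<lev k l (Suc n). y (Suc n) i \<in> M"
  shows "\<forall>i<lev k l n. y n i \<in> M"
proof (intro allI impI)
  fix i assume "i < lev k l n"
  moreover from this have "gr_proj (lev k l (Suc n)) (lev k l n) (y (Suc n)) i \<in> M"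
    unfolding gr_proj_def using assms(3)
    by (auto intro!: is_ideal_sum[OF maximal_ideal_is_ideal[OF max]])
  ultimately show "y n i \<in> M" by (rule red_iwasawa_mem_of_gr_proj_mem[OF assms(1,2)])
qed

text \<open>At a level \<open>k l\<^sup>n\<^sup>+\<^sup>1\<close> with \<open>l\<^sup>n\<^sup>+\<^sup>1\<close> beyond the period bound, the period \<open>\<delta>\<close> of \<open>y\<close> modulo \<open>M\<close>
  generates a subgroup containing \<open>k l\<^sup>n\<close>, so projecting to level \<open>k l\<^sup>n\<close> multiplies by \<open>l \<in> M\<close>.\<close>
lemma annihilator_mem_high_level:
  fixes f :: "'a::comm_ring_1 poly"
  assumes "prime l" and "0 < k" and "zl_algebra l TYPE('a)"
    and max: "maximal_ideal M" and R: "finite_residue_system M R"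
    and "coeff f 0 dvd 1" and y: "y \<in> red_iwasawa k l"
    and annih: "\<And>n i. i < lev k l n \<Longrightarrow> gr_mul (lev k l n) (gr_of_poly (lev k l n) f) (y n) i \<in> M"
    and "card R ^ degree f \<le> n" and "i < lev k l n"
  shows "y n i \<in> M"
proof -
  have M: "is_ideal M" using max by (rule maximal_ideal_is_ideal)
  define L where "L = lev k l (Suc n)"
  have "0 < L" unfolding L_def using \<open>0 < k\<close> prime_gt_0_nat[OF \<open>prime l\<close>] by (rule lev_pos)
  obtain b where unit: "coeff f 0 * b = 1" using \<open>coeff f 0 dvd 1\<close> by (metis dvdE)
  define Y where "Y w = y (Suc n) (w mod L)" for w
  have rec: "(\<Sum>d\<le>degree f. coeff f d * Y (u - d)) \<in> M" if "degree f \<le> u" for u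
    using annih[of "u mod L" "Suc n"] gr_mul_gr_of_poly[OF \<open>0 < L\<close> that] \<open>0 < L\<close>
    unfolding Y_def L_def by simp
  have per: "Y (u + L) = Y u" for u unfolding Y_def by simp
  obtain \<delta> where "0 < \<delta>" "\<delta> \<le> card R ^ degree f" and shift: "\<And>j. Y (j + \<delta>) - Y j \<in> M"
    using linear_recurrence_periodic_mod[OF M R unit rec per \<open>0 < L\<close>] by blast
  have "n < 2 ^ n" by simp
  also have "\<dots> \<le> l ^ n" using prime_ge_2_nat[OF \<open>prime l\<close>] by (rule power_mono) simp
  also have "\<dots> < l ^ Suc n" using prime_gt_1_nat[OF \<open>prime l\<close>] by simp
  finally have "\<delta> < l ^ Suc n" using \<open>\<delta> \<le> card R ^ degree f\<close> \<open>card R ^ degree f \<le> n\<close> by linarith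
  then have "y (Suc n) ((j + k * l ^ n) mod (k * l ^ Suc n)) - y (Suc n) (j mod (k * l ^ Suc n)) \<in> M" for j
    using shift_invariant_level_shift[OF M \<open>prime l\<close> \<open>0 < \<delta>\<close>] shift unfolding Y_def L_def lev_def
    by blast
  moreover have "(of_nat l :: 'a) \<in> M" by (rule prime_mem_maximal_ideal[OF \<open>prime l\<close> assms(3) max R])
  ultimately have "gr_proj (l * (k * l ^ n)) (k * l ^ n) (y (Suc n)) i \<in> M"
    using gr_proj_mem_if_shift_invariant[OF M, of l "k * l ^ n" i "y (Suc n)"] \<open>i < lev k l n\<close>
      \<open>0 < k\<close> prime_gt_0_nat[OF \<open>prime l\<close>]
    unfolding lev_def by (simp add: mult_ac)
  then show ?thesis
    using red_iwasawa_mem_of_gr_proj_mem[OF y max \<open>i < lev k l n\<close>] by (simp add: lev_def mult_ac)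
qed

lemma annihilator_mem_maximal_ideal:
  fixes f :: "'a::comm_ring_1 poly"
  assumes "prime l" and "0 < k" and "zl_algebra l TYPE('a)"
    and max: "maximal_ideal M" and R: "finite_residue_system M R"
    and "coeff f 0 dvd 1" and y: "y \<in> red_iwasawa k l"
    and annih: "\<And>n i. i < lev k l n \<Longrightarrow> gr_mul (lev k l n) (gr_of_poly (lev k l n) f) (y n) i \<in> M"
  shows "\<forall>i<lev k l n. y n i \<in> M"
proof -
  have "n \<le> max n (card R ^ degree f)" by simp
  then show ?thesis
  proof (induction rule: inc_induct)
    case base
    show ?case using annihilator_mem_high_level[OF assms] by simp
  next
    case (step n)
    then show ?case using red_iwasawa_mem_descend[OF y max] by blast
  qed
qed

theorem lemma8p5:
  fixes l k :: nat and f :: "'a::comm_ring_1 poly"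
  assumes "prime l" and "k \<ge> 1" and "coprime k l"
    and "adic_ring TYPE('a)" and "zl_algebra l TYPE('a)"
    and "f \<in> P_set"
  shows "poly_to_iwasawa k l f \<in> S_set k l"
proof -
  have "0 < k" "0 < l" using \<open>k \<ge> 1\<close> prime_gt_0_nat[OF \<open>prime l\<close>] by simp_all
  then have pos: "0 < lev k l n" for n by (rule lev_pos)
  have "red_zero k l y"
    if y: "y \<in> red_iwasawa k l"
      and annih: "red_zero k l (\<lambda>n. gr_mul (lev k l n) (poly_to_iwasawa k l f n) (y n))" for y
  proof -
    have "y n i \<in> M" if max: "maximal_ideal M" and "i < lev k l n" for M n i
    proof -
      obtain R where "finite_residue_system M R"
        using adic_ring_finite_residue_system[OF \<open>adic_ring TYPE('a)\<close> max] by blast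
      moreover have "gr_mul (lev k l n) (gr_of_poly (lev k l n) f) (y n) i \<in> M"
        if "i < lev k l n" for n i
        using annih that jac_subset_maximal_ideal[OF max] pos
        unfolding red_zero_def by (auto simp: poly_to_iwasawa_eq)
      ultimately show ?thesis
        using annihilator_mem_maximal_ideal[OF \<open>prime l\<close> \<open>0 < k\<close> \<open>zl_algebra l TYPE('a)\<close> max]
          \<open>f \<in> P_set\<close> y \<open>i < lev k l n\<close> unfolding P_set_def by blast
    qed
    then show ?thesis unfolding red_zero_def jac_def by blast
  qed
  then show ?thesis
    unfolding S_set_def using poly_to_iwasawa_in_iwasawa[OF \<open>0 < k\<close> \<open>0 < l\<close>] by blast
qed

end
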